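(* Let $G$ be the digraph with vertex set $\{v_1,\dots,v_{17}\}$ and the $27$ arcs $(v_1,v_2)$, $(v_2,v_5)$, $(v_2,v_3)$, $(v_3,v_5)$, $(v_3,v_4)$, $(v_4,v_5)$, $(v_5,v_9)$, $(v_5,v_7)$, $(v_5,v_6)$, $(v_6,v_7)$, $(v_7,v_9)$, $(v_7,v_8)$, $(v_8,v_9)$, $(v_9,v_{16})$, $(v_9,v_{13})$, $(v_9,v_{11})$, $(v_9,v_{10})$, $(v_{10},v_{11})$, $(v_{11},v_{13})$, $(v_{11},v_{12})$, $(v_{12},v_{13})$, $(v_{13},v_{16})$, $(v_{13},v_{15})$, $(v_{13},v_{14})$, $(v_{14},v_{15})$, $(v_{15},v_{16})$, $(v_{16},v_{17})$. Then $G$ is an esp-digraph and $\chi'_o(G)=7$. In particular the bound $\chi'_o(G)\le 7$ for esp-digraphs is best possible.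
   Context: An oriented $r$-arc-coloring of a digraph $G=(V,E)$ is a map $c:E\to\{1,\dots,r\}$ such that (i) $c((u,v))\ne c((v,w))$ for every two arcs $(u,v),(v,w)\in E$, and (ii) $c((u,v))\ne c((y,z))$ for all arcs $(u,v),(v,w),(x,y),(y,z)\in E$ with $c((v,w))=c((x,y))$. The oriented chromatic index $\chi'_o(G)$ is the smallest $r$ for which such a coloring exists. Edge series-parallel (multi)digraphs (esp-digraphs) are defined recursively, each with a distinguished source and sink: (i) a digraph with two distinct vertices $u,v$ and the single arc $(u,v)$ is an esp-digraph with source $u$ and sink $v$; (ii) if $G_1,G_2$ are vertex-disjoint esp-digraphs, then the parallel composition $G_1\cup G_2$ (identify the source of $G_1$ with the source of $G_2$ and the sink of $G_1$ with the sink of $G_2$; arcs are united, possibly creating parallel arcs) is an esp-digraph with these identified source and sink, and the series composition $G_1\times G_2$ (identify the sink of $G_1$ with the source of $G_2$) is an esp-digraph with source the source of $G_1$ and sink the sink of $G_2$. *)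

theory Defs
  imports Main "HOL-Library.Multiset"
begin

definition arc_verts :: "('a \<times> 'a) multiset \<Rightarrow> 'a set" where
  "arc_verts A = fst ` set_mset A \<union> snd ` set_mset A"

text \<open>Composition of vertex-disjoint esp-digraphs with identification of
  the terminals is modelled on labelled graphs: the two parts may share exactly the
  identified vertices.  (Esp-digraphs have no isolated vertices, so the vertex set is
  the set of endpoints of arcs.)\<close>
inductive esp :: "('a \<times> 'a) multiset \<Rightarrow> 'a \<Rightarrow> 'a \<Rightarrow> bool" where
  single: "u \<noteq> v \<Longrightarrow> esp {#(u, v)#} u v"
| parallel: "esp A1 s t \<Longrightarrow> esp A2 s t \<Longrightarrow> arc_verts A1 \<inter> arc_verts A2 = {s, t}
     \<Longrightarrow> esp (A1 + A2) s t"
| series: "esp A1 s m \<Longrightarrow> esp A2 m t \<Longrightarrow> arc_verts A1 \<inter> arc_verts A2 = {m}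
     \<Longrightarrow> esp (A1 + A2) s t"

definition is_esp_digraph :: "'a set \<Rightarrow> ('a \<times> 'a) multiset \<Rightarrow> bool" where
  "is_esp_digraph V A \<longleftrightarrow> V = arc_verts A \<and> (\<exists>s t. esp A s t)"

definition oriented_arc_coloring :: "('a \<times> 'a) set \<Rightarrow> nat \<Rightarrow> ('a \<times> 'a \<Rightarrow> nat) \<Rightarrow> bool" where
  "oriented_arc_coloring E r c \<longleftrightarrow>
     (\<forall>e\<in>E. c e \<in> {1..r}) \<and>
     (\<forall>u v w. (u, v) \<in> E \<and> (v, w) \<in> E \<longrightarrow> c (u, v) \<noteq> c (v, w)) \<and>
     (\<forall>u v w x y z. (u, v) \<in> E \<and> (v, w) \<in> E \<and> (x, y) \<in> E \<and> (y, z) \<in> E \<and>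
        c (v, w) = c (x, y) \<longrightarrow> c (u, v) \<noteq> c (y, z))"

definition oriented_chromatic_index :: "('a \<times> 'a) set \<Rightarrow> nat" where
  "oriented_chromatic_index E = (LEAST r. \<exists>c. oriented_arc_coloring E r c)"

definition G_arcs :: "(nat \<times> nat) list" where
  "G_arcs = [(1,2), (2,5), (2,3), (3,5), (3,4), (4,5), (5,9), (5,7), (5,6), (6,7),
             (7,9), (7,8), (8,9), (9,16), (9,13), (9,11), (9,10), (10,11), (11,13),
             (11,12), (12,13), (13,16), (13,15), (13,14), (14,15), (15,16), (16,17)]"

definition G_verts :: "nat set" where
  "G_verts = {1..17}"

end

theory Submission
  imports Defs "HOL-Combinatorics.Transposition"
begin

text \<open>The coloring condition says exactly that the color digraph, which joins the colors of
  any two consecutive arcs, is asymmetric.  This is invariant under renaming colors, so a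
  6-coloring of G may be assumed to give the arcs (v1,v2) and (v2,v5) the colors 1 and 2; the
  resulting finite problem is refuted by a SAT solver.  A 7-coloring is given explicitly, and G
  is esp, being assembled by series and parallel composition from triangles and single arcs.\<close>

lemma esp_terminals:
  assumes "esp A s t"
  shows "s \<in> arc_verts A" "t \<in> arc_verts A" "s \<noteq> t"
  using assms by (induction rule: esp.induct) (auto simp: arc_verts_def)

lemma esp_Cons_parallel_arc:
  assumes "esp (mset xs) s t"
  shows "esp (mset ((s, t) # xs)) s t"
proof -
  have "esp ({#(s, t)#} + mset xs) s t"
    by (rule esp.parallel)
      (use esp_terminals[OF assms] in \<open>auto intro: esp.single assms simp: arc_verts_def\<close>)
  then show ?thesis by simp
qed

lemma esp_arc: "u \<noteq> v \<Longrightarrow> esp (mset [(u, v)]) u v"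
  by (simp add: esp.single)

lemma esp_append_series:
  "esp (mset xs) s m \<Longrightarrow> esp (mset ys) m t \<Longrightarrow> arc_verts (mset xs) \<inter> arc_verts (mset ys) = {m}
    \<Longrightarrow> esp (mset (xs @ ys)) s t"
  using esp.series by fastforce

lemma esp_triangle:
  assumes "distinct [a, b, c]"
  shows "esp (mset [(a, c), (a, b), (b, c)]) a c"
proof -
  have "esp (mset ([(a, b)] @ [(b, c)])) a c"
    by (rule esp_append_series[OF esp_arc esp_arc]) (use assms in \<open>auto simp: arc_verts_def\<close>)
  then show ?thesis using esp_Cons_parallel_arc by fastforce
qed

lemma esp_G: "esp (mset G_arcs) 1 17"
proof -
  have T3_5: "esp (mset [(3,5),(3,4),(4,5)]) (3::nat) 5"
    and T5_7: "esp (mset [(5,7),(5,6),(6,7)]) (5::nat) 7"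
    and T7_9: "esp (mset [(7,9),(7,8),(8,9)]) (7::nat) 9"
    and T9_11: "esp (mset [(9,11),(9,10),(10,11)]) (9::nat) 11"
    and T11_13: "esp (mset [(11,13),(11,12),(12,13)]) (11::nat) 13"
    and T13_15: "esp (mset [(13,15),(13,14),(14,15)]) (13::nat) 15"
    by (rule esp_triangle, simp)+
  have B2_5: "esp (mset [(2,5),(2,3),(3,5),(3,4),(4,5)]) (2::nat) 5"
    using esp_Cons_parallel_arc[OF esp_append_series[OF esp_arc T3_5]] by (simp add: arc_verts_def)
  have B5_9: "esp (mset [(5,9),(5,7),(5,6),(6,7),(7,9),(7,8),(8,9)]) (5::nat) 9"
    using esp_Cons_parallel_arc[OF esp_append_series[OF T5_7 T7_9]] by (simp add: arc_verts_def)
  have B9_13: "esp (mset [(9,13),(9,11),(9,10),(10,11),(11,13),(11,12),(12,13)]) (9::nat) 13"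
    using esp_Cons_parallel_arc[OF esp_append_series[OF T9_11 T11_13]] by (simp add: arc_verts_def)
  have B13_16: "esp (mset [(13,16),(13,15),(13,14),(14,15),(15,16)]) (13::nat) 16"
    using esp_Cons_parallel_arc[OF esp_append_series[OF T13_15 esp_arc]] by (simp add: arc_verts_def)
  have B9_16: "esp (mset [(9,16),(9,13),(9,11),(9,10),(10,11),(11,13),(11,12),(12,13),
      (13,16),(13,15),(13,14),(14,15),(15,16)]) (9::nat) 16"
    using esp_Cons_parallel_arc[OF esp_append_series[OF B9_13 B13_16]] by (simp add: arc_verts_def)
  show ?thesis
    using esp_append_series[OF esp_arc esp_append_series[OF B2_5 esp_append_series[OF B5_9 esp_append_series[OF B9_16 esp_arc]]]]
    by (simp add: arc_verts_def G_arcs_def)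
qed

lemma is_esp_digraph_G: "is_esp_digraph G_verts (mset G_arcs)"
proof -
  have "G_verts = arc_verts (mset G_arcs)"
    by (simp add: G_verts_def G_arcs_def arc_verts_def) (auto; presburger)
  with esp_G show ?thesis
    unfolding is_esp_digraph_def by blast
qed

definition consecutive_arcs :: "('a \<times> 'a) set \<Rightarrow> (('a \<times> 'a) \<times> ('a \<times> 'a)) set" where
  "consecutive_arcs E = {(e, f). e \<in> E \<and> f \<in> E \<and> snd e = fst f}"

definition color_digraph :: "('a \<times> 'a) set \<Rightarrow> ('a \<times> 'a \<Rightarrow> nat) \<Rightarrow> nat rel" where
  "color_digraph E c = map_prod c c ` consecutive_arcs E"

lemma mem_color_digraph_iff:
  "(a, b) \<in> color_digraph E c \<longleftrightarrow>
     (\<exists>u v w. (u, v) \<in> E \<and> (v, w) \<in> E \<and> a = c (u, v) \<and> b = c (v, w))"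
  unfolding color_digraph_def consecutive_arcs_def by force

lemma oriented_arc_coloring_iff_asym:
  "oriented_arc_coloring E r c \<longleftrightarrow> c ` E \<subseteq> {1..r} \<and> asym (color_digraph E c)"
proof
  assume c: "oriented_arc_coloring E r c"
  show "c ` E \<subseteq> {1..r} \<and> asym (color_digraph E c)"
  proof (intro conjI asymI notI)
    show "c ` E \<subseteq> {1..r}" using c unfolding oriented_arc_coloring_def by blast
    fix a b assume "(a, b) \<in> color_digraph E c" "(b, a) \<in> color_digraph E c"
    then obtain u v w x y z where "(u, v) \<in> E" "(v, w) \<in> E" "a = c (u, v)" "b = c (v, w)"
      and "(x, y) \<in> E" "(y, z) \<in> E" "b = c (x, y)" "a = c (y, z)"
      unfolding mem_color_digraph_iff by blast
    with c show False unfolding oriented_arc_coloring_def by blast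
  qed
next
  assume "c ` E \<subseteq> {1..r} \<and> asym (color_digraph E c)"
  then have range: "c ` E \<subseteq> {1..r}" and asym: "asym (color_digraph E c)" by auto
  show "oriented_arc_coloring E r c"
    unfolding oriented_arc_coloring_def
  proof (intro conjI allI impI)
    show "\<forall>e\<in>E. c e \<in> {1..r}" using range by blast
  next
    fix u v w assume "(u, v) \<in> E \<and> (v, w) \<in> E"
    then have "(c (u, v), c (v, w)) \<in> color_digraph E c"
      unfolding mem_color_digraph_iff by blast
    with asym show "c (u, v) \<noteq> c (v, w)" by (metis asymD)
  next
    fix u v w x y z
    assume H: "(u, v) \<in> E \<and> (v, w) \<in> E \<and> (x, y) \<in> E \<and> (y, z) \<in> E \<and> c (v, w) = c (x, y)"
    then have "(c (u, v), c (v, w)) \<in> color_digraph E c" "(c (x, y), c (y, z)) \<in> color_digraph E c"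
      unfolding mem_color_digraph_iff by blast+
    with H asym show "c (u, v) \<noteq> c (y, z)" by (metis asymD)
  qed
qed

lemma oriented_arc_coloring_mono:
  "oriented_arc_coloring E r c \<Longrightarrow> r \<le> s \<Longrightarrow> oriented_arc_coloring E s c"
  unfolding oriented_arc_coloring_def by fastforce

lemma oriented_arc_coloring_comp:
  assumes "oriented_arc_coloring E r c" "inj f" "f ` {1..r} \<subseteq> {1..r}"
  shows "oriented_arc_coloring E r (f \<circ> c)"
  using assms unfolding oriented_arc_coloring_def by (auto simp: inj_eq image_subset_iff)

lemma oriented_arc_coloring_normalize:
  assumes c: "oriented_arc_coloring E r c" and ef: "(e, f) \<in> consecutive_arcs E"
  obtains c' where "oriented_arc_coloring E r c'" "c' e = 1" "c' f = 2"
proof -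
  have "(c e, c f) \<in> color_digraph E c"
    using ef unfolding color_digraph_def by force
  with c ef have colors: "c e \<in> {1..r}" "c f \<in> {1..r}" "c e \<noteq> c f"
    unfolding oriented_arc_coloring_iff_asym consecutive_arcs_def by (auto dest: asymD)
  then have "2 \<in> {1..r}"
    by auto
  define \<sigma> where "\<sigma> = transpose (transpose (c e) 1 (c f)) 2 \<circ> transpose (c e) 1"
  have "oriented_arc_coloring E r (\<sigma> \<circ> c)"
    unfolding \<sigma>_def comp_assoc
    by (intro oriented_arc_coloring_comp c inj_transpose)
      (use colors \<open>2 \<in> {1..r}\<close> in \<open>auto simp: transpose_def\<close>)
  moreover have "(\<sigma> \<circ> c) e = 1" "(\<sigma> \<circ> c) f = 2"
    using colors by (auto simp: \<sigma>_def transpose_def)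
  ultimately show thesis by (rule that)
qed

lemma oriented_chromatic_index_eqI:
  assumes "oriented_arc_coloring E (Suc r) c" and "\<And>c. \<not> oriented_arc_coloring E r c"
  shows "oriented_chromatic_index E = Suc r"
  unfolding oriented_chromatic_index_def
proof (rule Least_equality)
  show "\<exists>c. oriented_arc_coloring E (Suc r) c" using assms(1) by blast
  show "Suc r \<le> s" if "\<exists>c. oriented_arc_coloring E s c" for s
    using that assms(2) oriented_arc_coloring_mono by (metis not_less_eq_eq)
qed

lemma consecutive_arcs_set:
  "consecutive_arcs (set xs) = set [(e, f). e \<leftarrow> xs, f \<leftarrow> xs, snd e = fst f]"
  by (auto simp: consecutive_arcs_def)

lemma asym_set_iff: "asym (set xs) \<longleftrightarrow> (\<forall>(a, b) \<in> set xs. (b, a) \<notin> set xs)"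
  unfolding asym_on_def by blast

definition G_coloring :: "nat \<times> nat \<Rightarrow> nat" where
  "G_coloring = the \<circ> map_of (zip G_arcs
     [1, 2, 2, 3, 3, 1, 4, 4, 4, 5, 6, 6, 1, 7, 7, 7, 7, 2, 3, 3, 4, 5, 5, 5, 6, 1, 2])"

lemma G_oriented_7_coloring: "oriented_arc_coloring (set G_arcs) 7 G_coloring"
  unfolding oriented_arc_coloring_iff_asym color_digraph_def consecutive_arcs_set image_set
    asym_set_iff
  by (simp add: G_arcs_def G_coloring_def)

text \<open>A propositional relaxation of a normalized 6-coloring of G: X e a says that arc e may
  carry color a, and Y a b that color a is followed by color b somewhere.\<close>

lemma G_arcs_relaxed_6_coloring_unsat:
  fixes X :: "nat \<times> nat \<Rightarrow> nat \<Rightarrow> bool" and Y :: "nat \<Rightarrow> nat \<Rightarrow> bool"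
  defines "C \<equiv> {1, 2, 3, 4, 5, 6}"
  assumes clauses: "\<forall>e\<in>set G_arcs. \<exists>a\<in>C. X e a"
    "\<forall>(e, f)\<in>consecutive_arcs (set G_arcs). \<forall>a\<in>C. \<not> (X e a \<and> X f a)"
    "\<forall>(e, f)\<in>consecutive_arcs (set G_arcs). \<forall>a\<in>C. \<forall>b\<in>C. X e a \<longrightarrow> X f b \<longrightarrow> Y a b"
    "\<forall>a\<in>C. \<forall>b\<in>C. \<not> (Y a b \<and> Y b a)"
    "X (1, 2) 1" "X (2, 5) 2"
  shows False
  using clauses unfolding C_def consecutive_arcs_set
  apply (simp (no_asm_use) add: G_arcs_def)
  by sat

lemma G_not_6_colorable: "\<not> oriented_arc_coloring (set G_arcs) 6 c"
proof
  assume c: "oriented_arc_coloring (set G_arcs) 6 c"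
  have "((1, 2), (2, 5)) \<in> consecutive_arcs (set G_arcs)"
    by (simp add: consecutive_arcs_def G_arcs_def)
  then obtain c' where c': "oriented_arc_coloring (set G_arcs) 6 c'" "c' (1, 2) = 1" "c' (2, 5) = 2"
    by (rule oriented_arc_coloring_normalize[OF c])
  then have range: "c' e \<in> {1, 2, 3, 4, 5, 6}" if "e \<in> set G_arcs" for e
    using that unfolding oriented_arc_coloring_iff_asym by auto
  have asym: "asym (color_digraph (set G_arcs) c')"
    using c' unfolding oriented_arc_coloring_iff_asym by blast
  have edge: "(c' e, c' f) \<in> color_digraph (set G_arcs) c'"
    if "(e, f) \<in> consecutive_arcs (set G_arcs)" for e f
    using that unfolding color_digraph_def by force
  have irrefl: "(a, a) \<notin> color_digraph (set G_arcs) c'" for a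
    using asym by (blast dest: asymD)
  show False
    by (rule G_arcs_relaxed_6_coloring_unsat[where X = "\<lambda>e a. c' e = a"
          and Y = "\<lambda>a b. (a, b) \<in> color_digraph (set G_arcs) c'"])
      (use range edge irrefl asym c'(2,3) in \<open>fastforce dest: asymD\<close>)+
qed

theorem mainTheorem7:
  shows "is_esp_digraph G_verts (mset G_arcs) \<and>
         oriented_chromatic_index (set G_arcs) = 7"
proof
  show "is_esp_digraph G_verts (mset G_arcs)" by (fact is_esp_digraph_G)
  have "oriented_chromatic_index (set G_arcs) = Suc 6"
    by (rule oriented_chromatic_index_eqI) (use G_oriented_7_coloring G_not_6_colorable in simp_all)
  then show "oriented_chromatic_index (set G_arcs) = 7" by simp
qed

end
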